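(* Let $n>4$ and let $\phi:\mathrm{Aut}(F_n)\to\mathrm{Diff}^2_+(S^1)$ be a homomorphism. For $i\neq j$ put $a_{ij}=\phi(A_{ij})$ and $b_{ij}=\phi(B_{ij})$. Then each of the diffeomorphisms $a_{ij}$ and $b_{ij}$ has a fixed point.
   Context: $F_n$ is the free group with basis $e_1,\dots,e_n$. For $i\neq j$, $A_{ij}\in\mathrm{Aut}(F_n)$ is defined by $A_{ij}(e_i)=e_ie_j$ and $A_{ij}(e_k)=e_k$ for $k\neq i$, and $B_{ij}\in\mathrm{Aut}(F_n)$ by $B_{ij}(e_i)=e_je_i$ and $B_{ij}(e_k)=e_k$ for $k\neq i$. $\mathrm{Diff}^2_+(S^1)$ is the group of orientation-preserving $C^2$ diffeomorphisms of $S^1$. *)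

theory Defs
  imports "HOL-Analysis.Analysis" "HOL-Algebra.Bij"
begin

text \<open>A letter is a pair (i, b): (i, True) stands for e_i and (i, False) for e_i^{-1}.
  Elements of F_n are freely reduced words in the letters with 1 \<le> i \<le> n.\<close>

type_synonym letter = "nat \<times> bool"

definition inv_letter :: "letter \<Rightarrow> letter" where
  "inv_letter x = (fst x, \<not> snd x)"

definition inv_word :: "letter list \<Rightarrow> letter list" where
  "inv_word w = rev (map inv_letter w)"

definition reduced :: "letter list \<Rightarrow> bool" where
  "reduced w \<longleftrightarrow> (\<forall>k. Suc k < length w \<longrightarrow> w ! Suc k \<noteq> inv_letter (w ! k))"

definition push_letter :: "letter \<Rightarrow> letter list \<Rightarrow> letter list" where
  "push_letter x acc = (case acc of [] \<Rightarrow> [x]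
      | y # ys \<Rightarrow> (if y = inv_letter x then ys else x # acc))"

definition reduce :: "letter list \<Rightarrow> letter list" where
  "reduce w = foldr push_letter w []"

definition free_group :: "nat \<Rightarrow> letter list monoid" where
  "free_group n = \<lparr>carrier = {w. reduced w \<and> (\<forall>x\<in>set w. 1 \<le> fst x \<and> fst x \<le> n)},
                   mult = (\<lambda>u v. reduce (u @ v)),
                   one = []\<rparr>"

definition subst_hom :: "nat \<Rightarrow> (nat \<Rightarrow> letter list) \<Rightarrow> letter list \<Rightarrow> letter list" where
  "subst_hom n \<sigma> = (\<lambda>w \<in> carrier (free_group n).
      reduce (concat (map (\<lambda>x. if snd x then \<sigma> (fst x) else inv_word (\<sigma> (fst x))) w)))"

definition gen :: "nat \<Rightarrow> letter list" where
  "gen i = [(i, True)]"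

definition A_aut :: "nat \<Rightarrow> nat \<Rightarrow> nat \<Rightarrow> letter list \<Rightarrow> letter list" where
  "A_aut n i j = subst_hom n (\<lambda>k. if k = i then gen i @ gen j else gen k)"

definition B_aut :: "nat \<Rightarrow> nat \<Rightarrow> nat \<Rightarrow> letter list \<Rightarrow> letter list" where
  "B_aut n i j = subst_hom n (\<lambda>k. if k = i then gen j @ gen i else gen k)"

text \<open>Aut(F_n), with multiplication g \<otimes> f = g \<circ> f (library AutoGroup).\<close>
abbreviation Aut_free :: "nat \<Rightarrow> (letter list \<Rightarrow> letter list) monoid" where
  "Aut_free n \<equiv> AutoGroup (free_group n)"

abbreviation S1 :: "complex set" where
  "S1 \<equiv> sphere 0 1"

definition circ :: "real \<Rightarrow> complex" where
  "circ t = cis (2 * pi * t)"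

text \<open>A C^2 lift of an orientation preserving C^2 diffeomorphism of the circle:
  F(t+1) = F(t) + 1, F is C^2 with F' > 0 (the inverse is then C^2 by the inverse
  function theorem).\<close>
definition C2_lift :: "(real \<Rightarrow> real) \<Rightarrow> bool" where
  "C2_lift F \<longleftrightarrow> (\<forall>t. F (t + 1) = F t + 1)
     \<and> (\<exists>F' F''. (\<forall>t. (F has_real_derivative F' t) (at t)
                    \<and> (F' has_real_derivative F'' t) (at t)
                    \<and> F' t > 0)
               \<and> continuous_on UNIV F'')"

text \<open>Elements are maps on complex numbers that act on S^1 as such a diffeomorphism and
  are the identity off S^1 (so that they are determined by their action on S^1).\<close>
definition Diff2_S1 :: "(complex \<Rightarrow> complex) monoid" where
  "Diff2_S1 = \<lparr>carrier = {f. (\<exists>F. C2_lift F \<and> (\<forall>t. f (circ t) = circ (F t)))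
                             \<and> (\<forall>z. z \<notin> S1 \<longrightarrow> f z = z)},
              mult = (\<lambda>f g. f \<circ> g),
              one = id\<rparr>"

definition has_fixed_point_S1 :: "(complex \<Rightarrow> complex) \<Rightarrow> bool" where
  "has_fixed_point_S1 f \<longleftrightarrow> (\<exists>z\<in>S1. f z = z)"

end

theory Submission
  imports Defs
begin

(* For distinct i, j, k put x = A_ik, y = A_kj and z = A_ij (likewise with B); then
   y x = x y z and z y = y z in Aut(F_n), so only n >= 3 is needed. Suppose phi z has no fixed
   point and let X, Y, Z be lifts to the real line of phi x, phi y, phi z, with t < Z t < t + 1.
   By continuity the two relations lift up to integer constants: Y X = X Y Z + a, and
   Z Y = Y Z because the constant there has absolute value below 1. Iterating gives
   Y^N X = X Y^N Z^N + a N. A lift moves any two points by amounts differing by at most 1, so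
   a N + Z^N(0) stays bounded, whereas d N <= Z^N(0) <= M N with 0 < d <= M < 1: no integer a
   can compensate this drift. *)

lemma inv_letter_inv [simp]: "inv_letter (inv_letter x) = x"
  and fst_inv_letter [simp]: "fst (inv_letter x) = fst x"
  and snd_inv_letter [simp]: "snd (inv_letter x) = (\<not> snd x)"
  by (simp_all add: inv_letter_def)

lemma reduced_Nil [simp]: "reduced []"
  and reduced_singleton [simp]: "reduced [x]"
  by (simp_all add: reduced_def)

lemma reduced_Cons_Cons [simp]:
  "reduced (x # y # ys) \<longleftrightarrow> y \<noteq> inv_letter x \<and> reduced (y # ys)"
  unfolding reduced_def
  by (metis Suc_less_eq length_Cons nth_Cons_0 nth_Cons_Suc zero_less_Suc not0_implies_Suc)

lemma reduced_ConsD: "reduced (x # ys) \<Longrightarrow> reduced ys"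
  by (cases ys) auto

lemma reduced_push_letter: "reduced acc \<Longrightarrow> reduced (push_letter x acc)"
  by (cases acc) (auto simp: push_letter_def dest: reduced_ConsD)

lemma push_letter_inv_letter:
  "reduced acc \<Longrightarrow> push_letter x (push_letter (inv_letter x) acc) = acc"
  by (cases acc rule: remdups_adj.cases) (auto simp: push_letter_def)

lemma reduced_foldr_push_letter: "reduced acc \<Longrightarrow> reduced (foldr push_letter u acc)"
  by (induction u) (auto intro: reduced_push_letter)

lemma reduced_reduce: "reduced (reduce w)"
  unfolding reduce_def by (rule reduced_foldr_push_letter) simp

lemma reduce_reduced: "reduced w \<Longrightarrow> reduce w = w"
proof (induction w)
  case (Cons x w)
  then have "reduce w = w" by (blast dest: reduced_ConsD)
  with Cons.prems show ?case
    by (cases w) (auto simp: reduce_def push_letter_def)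
qed (simp add: reduce_def)

lemma reduce_Nil [simp]: "reduce [] = []"
  by (simp add: reduce_def)

lemma reduce_append: "reduce (u @ v) = foldr push_letter u (reduce v)"
  by (simp add: reduce_def)

lemma push_letter_foldr_push_letter:
  assumes "reduced acc" "reduced r"
  shows "push_letter x (foldr push_letter r acc) = foldr push_letter (push_letter x r) acc"
proof (cases r)
  case (Cons y ys)
  show ?thesis
  proof (cases "y = inv_letter x")
    case True
    then have "push_letter x (foldr push_letter r acc)
        = push_letter x (push_letter (inv_letter x) (foldr push_letter ys acc))"
      using Cons by simp
    also have "\<dots> = foldr push_letter ys acc"
      using assms(1) by (intro push_letter_inv_letter reduced_foldr_push_letter)
    finally show ?thesis using Cons True by (simp add: push_letter_def)
  qed (simp add: Cons push_letter_def)
qed (simp add: push_letter_def)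

lemma foldr_push_letter_reduce:
  "reduced acc \<Longrightarrow> foldr push_letter (reduce u) acc = foldr push_letter u acc"
  by (induction u)
    (simp_all add: reduce_def push_letter_foldr_push_letter[symmetric]
      reduced_reduce[unfolded reduce_def])

lemma reduce_append_reduce_left: "reduce (reduce u @ v) = reduce (u @ v)"
  by (simp add: reduce_append foldr_push_letter_reduce reduced_reduce)

lemma reduce_append_reduce_right: "reduce (u @ reduce v) = reduce (u @ v)"
  by (simp add: reduce_append reduce_reduced reduced_reduce)

lemma inv_word_Nil [simp]: "inv_word [] = []"
  and inv_word_Cons [simp]: "inv_word (x # s) = inv_word s @ [inv_letter x]"
  and inv_word_append [simp]: "inv_word (s @ t) = inv_word t @ inv_word s"
  and inv_word_inv_word [simp]: "inv_word (inv_word s) = s"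
  and set_inv_word: "set (inv_word s) = inv_letter ` set s"
  by (simp_all add: inv_word_def rev_map o_def)

lemma foldr_push_letter_cancel:
  "reduced acc \<Longrightarrow> foldr push_letter (s @ inv_word s) acc = acc"
  by (induction s arbitrary: acc) (simp_all add: push_letter_inv_letter reduced_push_letter)

lemma reduce_cancel: "reduce (s @ inv_word s @ r) = reduce r"
  using foldr_push_letter_cancel[OF reduced_reduce, of s r] by (simp add: reduce_append)

lemma reduce_inv_word_reduce: "reduce (inv_word (reduce s)) = reduce (inv_word s)"
proof -
  have "reduce (inv_word s) = reduce (inv_word s @ reduce (s @ inv_word (reduce s)))"
    using reduce_cancel[of "reduce s" "[]"]
    by (simp add: reduce_append_reduce_left[of s, symmetric])
  also have "\<dots> = reduce (inv_word (reduce s))"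
    using reduce_cancel[of "inv_word s" "inv_word (reduce s)"]
    by (simp add: reduce_append_reduce_right)
  finally show ?thesis ..
qed

lemma set_push_letter: "set (push_letter x acc) \<subseteq> insert x (set acc)"
  by (cases acc) (auto simp: push_letter_def)

lemma set_reduce: "set (reduce w) \<subseteq> set w"
proof -
  have "set (foldr push_letter w acc) \<subseteq> set w \<union> set acc" for acc
    by (induction w) (use set_push_letter in fastforce)+
  from this[of "[]"] show ?thesis by (simp add: reduce_def)
qed

definition subst_letter :: "(nat \<Rightarrow> letter list) \<Rightarrow> letter \<Rightarrow> letter list" where
  "subst_letter \<sigma> x = (if snd x then \<sigma> (fst x) else inv_word (\<sigma> (fst x)))"

definition subst_word :: "(nat \<Rightarrow> letter list) \<Rightarrow> letter list \<Rightarrow> letter list" where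
  "subst_word \<sigma> w = concat (map (subst_letter \<sigma>) w)"

lemma subst_word_Nil [simp]: "subst_word \<sigma> [] = []"
  and subst_word_Cons [simp]: "subst_word \<sigma> (x # w) = subst_letter \<sigma> x @ subst_word \<sigma> w"
  and subst_word_append [simp]: "subst_word \<sigma> (u @ v) = subst_word \<sigma> u @ subst_word \<sigma> v"
  by (simp_all add: subst_word_def)

lemma subst_letter_inv_letter [simp]:
  "subst_letter \<sigma> (inv_letter x) = inv_word (subst_letter \<sigma> x)"
  by (simp add: subst_letter_def)

lemma subst_word_inv_word: "subst_word \<sigma> (inv_word s) = inv_word (subst_word \<sigma> s)"
  by (induction s) simp_all

lemma subst_word_subst_word:
  "subst_word \<sigma> (subst_word \<tau> w) = subst_word (\<lambda>k. subst_word \<sigma> (\<tau> k)) w"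
proof (induction w)
  case (Cons x w)
  have "subst_word \<sigma> (subst_letter \<tau> x) = subst_letter (\<lambda>k. subst_word \<sigma> (\<tau> k)) x"
    by (simp add: subst_letter_def subst_word_inv_word)
  with Cons show ?case by simp
qed simp

lemma subst_word_gen: "subst_word gen w = w"
  by (induction w) (auto simp: subst_letter_def gen_def inv_word_def inv_letter_def)

lemma reduce_subst_word_push_letter:
  "reduce (subst_word \<sigma> (push_letter x acc)) = reduce (subst_letter \<sigma> x @ subst_word \<sigma> acc)"
proof (cases acc)
  case (Cons y ys)
  then show ?thesis
    by (cases "y = inv_letter x") (simp_all add: push_letter_def reduce_cancel)
qed (simp add: push_letter_def)

lemma reduce_subst_word_reduce: "reduce (subst_word \<sigma> (reduce w)) = reduce (subst_word \<sigma> w)"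
proof -
  have "reduce (subst_word \<sigma> (foldr push_letter w acc)) = reduce (subst_word \<sigma> (w @ acc))" for acc
  proof (induction w)
    case (Cons x w)
    have "reduce (subst_word \<sigma> (foldr push_letter (x # w) acc))
        = reduce (subst_letter \<sigma> x @ reduce (subst_word \<sigma> (foldr push_letter w acc)))"
      by (simp add: reduce_subst_word_push_letter reduce_append_reduce_right)
    with Cons show ?case by (simp add: reduce_append_reduce_right)
  qed simp
  from this[of "[]"] show ?thesis by (simp add: reduce_def)
qed

lemma reduce_subst_word_cong:
  assumes "\<And>x. x \<in> set w \<Longrightarrow> reduce (\<sigma> (fst x)) = reduce (\<rho> (fst x))"
  shows "reduce (subst_word \<sigma> w) = reduce (subst_word \<rho> w)"
  using assms
proof (induction w)
  case (Cons x w)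
  have "reduce (subst_letter \<sigma> x) = reduce (subst_letter \<rho> x)"
    using Cons.prems[of x] reduce_inv_word_reduce[of "\<sigma> (fst x)"]
      reduce_inv_word_reduce[of "\<rho> (fst x)"]
    by (auto simp: subst_letter_def)
  then have "reduce (subst_letter \<sigma> x @ reduce (subst_word \<sigma> w))
      = reduce (subst_letter \<rho> x @ reduce (subst_word \<rho> w))"
    using Cons by (metis list.set_intros(2) reduce_append_reduce_left)
  then show ?case by (simp add: reduce_append_reduce_right)
qed simp

definition letters :: "nat \<Rightarrow> letter set" where
  "letters n = {x. fst x \<in> {1..n}}"

lemma carrier_free_group: "w \<in> carrier (free_group n) \<longleftrightarrow> reduced w \<and> set w \<subseteq> letters n"
  by (auto simp: free_group_def letters_def)

lemma mult_free_group: "u \<otimes>\<^bsub>free_group n\<^esub> v = reduce (u @ v)"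
  by (simp add: free_group_def)

lemma reduce_in_carrier: "set w \<subseteq> letters n \<Longrightarrow> reduce w \<in> carrier (free_group n)"
  using set_reduce[of w] by (auto simp: carrier_free_group reduced_reduce)

lemma free_group_mult_closed:
  "u \<in> carrier (free_group n) \<Longrightarrow> v \<in> carrier (free_group n) \<Longrightarrow>
    u \<otimes>\<^bsub>free_group n\<^esub> v \<in> carrier (free_group n)"
  unfolding mult_free_group by (rule reduce_in_carrier) (auto simp: carrier_free_group)

lemma set_subst_word_letters:
  assumes "\<forall>k\<in>{1..n}. set (\<sigma> k) \<subseteq> letters n" and "set w \<subseteq> letters n"
  shows "set (subst_word \<sigma> w) \<subseteq> letters n"
  using assms(2)
proof (induction w)
  case (Cons x w)
  have "set (\<sigma> (fst x)) \<subseteq> letters n"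
    using assms(1) Cons.prems by (auto simp: letters_def)
  then have "set (subst_letter \<sigma> x) \<subseteq> letters n"
    by (auto simp: subst_letter_def set_inv_word letters_def)
  with Cons show ?case by simp
qed simp

lemma subst_hom_eq: "w \<in> carrier (free_group n) \<Longrightarrow> subst_hom n \<sigma> w = reduce (subst_word \<sigma> w)"
  by (simp add: subst_hom_def subst_word_def subst_letter_def[abs_def])

lemma subst_hom_in_carrier:
  "\<forall>k\<in>{1..n}. set (\<sigma> k) \<subseteq> letters n \<Longrightarrow> w \<in> carrier (free_group n) \<Longrightarrow>
    subst_hom n \<sigma> w \<in> carrier (free_group n)"
  by (simp add: subst_hom_eq)
    (intro reduce_in_carrier set_subst_word_letters; simp add: carrier_free_group)

lemma subst_hom_hom:
  assumes "\<forall>k\<in>{1..n}. set (\<sigma> k) \<subseteq> letters n"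
  shows "subst_hom n \<sigma> \<in> hom (free_group n) (free_group n)"
proof (rule homI)
  fix u v assume "u \<in> carrier (free_group n)" "v \<in> carrier (free_group n)"
  moreover have "reduce (u @ v) \<in> carrier (free_group n)"
    using free_group_mult_closed[OF calculation] by (simp add: mult_free_group)
  ultimately show "subst_hom n \<sigma> (u \<otimes>\<^bsub>free_group n\<^esub> v)
      = subst_hom n \<sigma> u \<otimes>\<^bsub>free_group n\<^esub> subst_hom n \<sigma> v"
    by (simp add: subst_hom_eq free_group_mult_closed mult_free_group reduce_subst_word_reduce
        reduce_append_reduce_left reduce_append_reduce_right)
qed (rule subst_hom_in_carrier[OF assms])

lemma subst_hom_compose:
  assumes "\<forall>k\<in>{1..n}. set (\<tau> k) \<subseteq> letters n"
  shows "compose (carrier (free_group n)) (subst_hom n \<sigma>) (subst_hom n \<tau>)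
    = subst_hom n (\<lambda>k. subst_word \<sigma> (\<tau> k))"
proof (rule extensionalityI)
  fix w assume "w \<in> carrier (free_group n)"
  then show "compose (carrier (free_group n)) (subst_hom n \<sigma>) (subst_hom n \<tau>) w
      = subst_hom n (\<lambda>k. subst_word \<sigma> (\<tau> k)) w"
    using subst_hom_in_carrier[OF assms]
    by (simp add: compose_def subst_hom_eq reduce_subst_word_reduce subst_word_subst_word)
qed (simp_all add: subst_hom_def)

lemma subst_hom_cong:
  assumes "\<And>k. k \<in> {1..n} \<Longrightarrow> reduce (\<sigma> k) = reduce (\<rho> k)"
  shows "subst_hom n \<sigma> = subst_hom n \<rho>"
proof (rule extensionalityI)
  fix w assume "w \<in> carrier (free_group n)"
  then show "subst_hom n \<sigma> w = subst_hom n \<rho> w"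
    using assms
    by (auto simp: subst_hom_eq carrier_free_group letters_def intro: reduce_subst_word_cong)
qed (simp_all add: subst_hom_def)

lemma subst_hom_gen: "subst_hom n gen = (\<lambda>w \<in> carrier (free_group n). w)"
proof (rule extensionalityI)
  fix w assume "w \<in> carrier (free_group n)"
  then show "subst_hom n gen w = (\<lambda>w \<in> carrier (free_group n). w) w"
    by (simp add: subst_hom_eq subst_word_gen reduce_reduced carrier_free_group)
qed (simp_all add: subst_hom_def)

lemma subst_hom_compose_inverse:
  assumes "\<forall>k\<in>{1..n}. set (\<tau> k) \<subseteq> letters n"
    and "\<And>k. k \<in> {1..n} \<Longrightarrow> reduce (subst_word \<sigma> (\<tau> k)) = gen k"
    and "w \<in> carrier (free_group n)"
  shows "subst_hom n \<sigma> (subst_hom n \<tau> w) = w"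
proof -
  have "compose (carrier (free_group n)) (subst_hom n \<sigma>) (subst_hom n \<tau>) = subst_hom n gen"
    unfolding subst_hom_compose[OF assms(1)]
    by (rule subst_hom_cong) (simp add: assms(2) gen_def reduce_reduced)
  from fun_cong[OF this, of w] show ?thesis
    using assms(3) by (simp add: compose_eq subst_hom_gen)
qed

lemma subst_hom_in_auto:
  assumes \<sigma>: "\<forall>k\<in>{1..n}. set (\<sigma> k) \<subseteq> letters n" and \<sigma>': "\<forall>k\<in>{1..n}. set (\<sigma>' k) \<subseteq> letters n"
    and "\<And>k. k \<in> {1..n} \<Longrightarrow> reduce (subst_word \<sigma> (\<sigma>' k)) = gen k"
    and "\<And>k. k \<in> {1..n} \<Longrightarrow> reduce (subst_word \<sigma>' (\<sigma> k)) = gen k"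
  shows "subst_hom n \<sigma> \<in> auto (free_group n)"
proof -
  have "bij_betw (subst_hom n \<sigma>) (carrier (free_group n)) (carrier (free_group n))"
    by (rule bij_betw_byWitness[where f' = "subst_hom n \<sigma>'"])
      (use assms subst_hom_in_carrier subst_hom_compose_inverse in auto)
  then show ?thesis
    using subst_hom_hom[OF \<sigma>] by (simp add: auto_def Bij_def subst_hom_def)
qed

lemma carrier_AutoGroup: "carrier (AutoGroup G) = auto G"
  by (simp add: AutoGroup_def BijGroup_def)

lemma mult_AutoGroup:
  "f \<in> auto G \<Longrightarrow> g \<in> auto G \<Longrightarrow> f \<otimes>\<^bsub>AutoGroup G\<^esub> g = compose (carrier G) f g"
  by (simp add: AutoGroup_def BijGroup_def auto_def)

lemma compose_in_auto:
  assumes closed: "\<And>x y. x \<in> carrier G \<Longrightarrow> y \<in> carrier G \<Longrightarrow> x \<otimes>\<^bsub>G\<^esub> y \<in> carrier G"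
    and "f \<in> auto G" "g \<in> auto G"
  shows "compose (carrier G) f g \<in> auto G"
proof -
  have "compose (carrier G) f g \<in> Bij (carrier G)"
    using assms(2,3) by (auto simp: auto_def intro: compose_Bij)
  moreover have "compose (carrier G) f g \<in> hom G G"
    using assms unfolding auto_def hom_def compose_def by (auto simp: Pi_iff)
  ultimately show ?thesis by (simp add: auto_def)
qed

(* The multiplier is a letter rather than a generator so that the inverse of
   transvection right i x is transvection right i (inv_letter x). *)
definition transvection :: "bool \<Rightarrow> nat \<Rightarrow> letter \<Rightarrow> nat \<Rightarrow> letter list" where
  "transvection right i x k =
    (if k \<noteq> i then gen k else if right then [(i, True), x] else [x, (i, True)])"

lemma A_aut_eq_transvection: "A_aut n i j = subst_hom n (transvection True i (j, True))"
  unfolding A_aut_def by (rule arg_cong[where f = "subst_hom n"]) (auto simp: transvection_def gen_def)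

lemma B_aut_eq_transvection: "B_aut n i j = subst_hom n (transvection False i (j, True))"
  unfolding B_aut_def by (rule arg_cong[where f = "subst_hom n"]) (auto simp: transvection_def gen_def)

lemma set_transvection_letters:
  "i \<in> {1..n} \<Longrightarrow> fst x \<in> {1..n} \<Longrightarrow> \<forall>k\<in>{1..n}. set (transvection right i x k) \<subseteq> letters n"
  by (auto simp: transvection_def gen_def letters_def)

lemma transvection_in_auto:
  assumes "i \<in> {1..n}" "fst x \<in> {1..n}" "fst x \<noteq> i"
  shows "subst_hom n (transvection right i x) \<in> auto (free_group n)"
proof -
  obtain j b where x: "x = (j, b)" by fastforce
  show ?thesis
    by (rule subst_hom_in_auto[where \<sigma>' = "transvection right i (inv_letter x)"])
      (use assms in \<open>auto simp: set_transvection_letters x transvection_def subst_letter_def letters_def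
        gen_def inv_word_def inv_letter_def reduce_def push_letter_def\<close>)
qed

lemma transvection_compose_relations:
  fixes right :: bool
  assumes "i \<in> {1..n}" "j \<in> {1..n}" "k \<in> {1..n}" "i \<noteq> j" "i \<noteq> k" "k \<noteq> j"
  defines "W \<equiv> carrier (free_group n)"
    and "x \<equiv> subst_hom n (transvection right i (k, True))"
    and "y \<equiv> subst_hom n (transvection right k (j, True))"
    and "z \<equiv> subst_hom n (transvection right i (j, True))"
  shows "compose W y x = compose W x (compose W y z)" and "compose W z y = compose W y z"
proof -
  have letters: "\<forall>m\<in>{1..n}. set (transvection right a (b, True) m) \<subseteq> letters n"
    if "a \<in> {1..n}" "b \<in> {1..n}" for a b
    using that by (simp add: set_transvection_letters)
  have "\<forall>m\<in>{1..n}. set (subst_word (transvection right k (j, True)) (transvection right i (j, True) m))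
      \<subseteq> letters n"
    using assms(1-3) by (simp add: set_subst_word_letters letters)
  then show "compose W y x = compose W x (compose W y z)"
    unfolding W_def x_def y_def z_def using assms(1-3)
    by (simp add: subst_hom_compose letters)
      (use assms in \<open>auto intro!: arg_cong[where f = "subst_hom n"]
        simp: transvection_def gen_def subst_letter_def\<close>)
  show "compose W z y = compose W y z"
    unfolding W_def y_def z_def using assms(1-3)
    by (simp add: subst_hom_compose letters)
      (use assms in \<open>auto intro!: arg_cong[where f = "subst_hom n"]
        simp: transvection_def gen_def subst_letter_def\<close>)
qed

lemma transvection_relations:
  fixes right :: bool
  assumes "i \<in> {1..n}" "j \<in> {1..n}" "k \<in> {1..n}" "i \<noteq> j" "i \<noteq> k" "k \<noteq> j"
  defines "x \<equiv> subst_hom n (transvection right i (k, True))"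
    and "y \<equiv> subst_hom n (transvection right k (j, True))"
    and "z \<equiv> subst_hom n (transvection right i (j, True))"
  shows "x \<in> carrier (Aut_free n)" "y \<in> carrier (Aut_free n)" "z \<in> carrier (Aut_free n)"
    and "y \<otimes>\<^bsub>Aut_free n\<^esub> z \<in> carrier (Aut_free n)"
    and "y \<otimes>\<^bsub>Aut_free n\<^esub> x = x \<otimes>\<^bsub>Aut_free n\<^esub> (y \<otimes>\<^bsub>Aut_free n\<^esub> z)"
    and "z \<otimes>\<^bsub>Aut_free n\<^esub> y = y \<otimes>\<^bsub>Aut_free n\<^esub> z"
proof -
  have auto: "x \<in> auto (free_group n)" "y \<in> auto (free_group n)" "z \<in> auto (free_group n)"
    using assms by (simp_all add: transvection_in_auto)
  then show "x \<in> carrier (Aut_free n)" "y \<in> carrier (Aut_free n)" "z \<in> carrier (Aut_free n)"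
    by (simp_all add: carrier_AutoGroup)
  have yz: "compose (carrier (free_group n)) y z \<in> auto (free_group n)"
    using auto by (simp add: compose_in_auto free_group_mult_closed)
  with auto show "y \<otimes>\<^bsub>Aut_free n\<^esub> z \<in> carrier (Aut_free n)"
    by (simp add: carrier_AutoGroup mult_AutoGroup)
  show "y \<otimes>\<^bsub>Aut_free n\<^esub> x = x \<otimes>\<^bsub>Aut_free n\<^esub> (y \<otimes>\<^bsub>Aut_free n\<^esub> z)"
    "z \<otimes>\<^bsub>Aut_free n\<^esub> y = y \<otimes>\<^bsub>Aut_free n\<^esub> z"
    using auto yz transvection_compose_relations[OF assms(1-6), of right]
    by (simp_all add: mult_AutoGroup x_def y_def z_def)
qed

definition degree_one_lift :: "(real \<Rightarrow> real) \<Rightarrow> bool" where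
  "degree_one_lift F \<longleftrightarrow> continuous_on UNIV F \<and> mono F \<and> (\<forall>t. F (t + 1) = F t + 1)"

lemma C2_lift_imp_degree_one_lift: "C2_lift F \<Longrightarrow> degree_one_lift F"
proof -
  assume "C2_lift F"
  then obtain F' where periodic: "\<forall>t. F (t + 1) = F t + 1"
    and F': "\<And>t. (F has_real_derivative F' t) (at t)" "\<And>t. F' t > 0"
    unfolding C2_lift_def by blast
  have "continuous_on UNIV F"
    using F'(1) by (meson DERIV_isCont continuous_at_imp_continuous_on)
  moreover have "strict_mono F"
    by (rule strict_monoI, rule DERIV_pos_imp_increasing) (use F' in auto)
  ultimately show ?thesis
    using periodic by (simp add: degree_one_lift_def strict_mono_mono)
qed

lemma degree_one_lift_add_int:
  assumes "degree_one_lift F"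
  shows "F (t + of_int m) = F t + of_int m"
proof -
  have step: "F (t + of_int (i + 1)) = F (t + of_int i) + 1" for i
    using assms unfolding degree_one_lift_def by (metis add.assoc of_int_1 of_int_add)
  show ?thesis
  proof (induction m rule: int_induct[where k = 0])
    case (step1 i)
    then show ?case
      using step[of i] by simp
  next
    case (step2 i)
    then show ?case
      using step[of "i - 1"] by simp
  qed simp
qed

lemma degree_one_lift_compose:
  "degree_one_lift F \<Longrightarrow> degree_one_lift G \<Longrightarrow> degree_one_lift (F \<circ> G)"
  unfolding degree_one_lift_def
  by (auto intro: continuous_on_compose2 simp: mono_def)

lemma degree_one_lift_funpow: "degree_one_lift F \<Longrightarrow> degree_one_lift (F ^^ N)"
proof (induction N)
  case 0
  then show ?case by (simp add: degree_one_lift_def mono_def)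
next
  case (Suc N)
  then show ?case
    using degree_one_lift_compose[of F "F ^^ N"] by (simp add: comp_def)
qed

lemma degree_one_lift_displacement:
  assumes "degree_one_lift F"
  shows "\<bar>F (s + r) - F s - r\<bar> \<le> 1"
proof -
  have mono: "mono F" using assms by (simp add: degree_one_lift_def)
  have "F (s + r) \<le> F (s + of_int \<lceil>r\<rceil>)"
    by (rule monoD[OF mono]) simp
  moreover have "F (s + of_int \<lfloor>r\<rfloor>) \<le> F (s + r)"
    by (rule monoD[OF mono]) simp
  ultimately show ?thesis
    using degree_one_lift_add_int[OF assms, of s "\<lceil>r\<rceil>"]
      degree_one_lift_add_int[OF assms, of s "\<lfloor>r\<rfloor>"]
      ceiling_correct[of r] floor_correct[of r]
    by (simp add: abs_le_iff) linarith
qed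

lemma degree_one_lift_displacement_attains_bounds:
  assumes "degree_one_lift F"
  obtains t0 t1 where "\<And>t. F t0 - t0 \<le> F t - t" "\<And>t. F t - t \<le> F t1 - t1"
proof -
  have cont: "continuous_on {0..1} (\<lambda>t. F t - t)"
    using assms unfolding degree_one_lift_def
    by (intro continuous_intros) (auto intro: continuous_on_subset)
  obtain t0 where t0: "\<forall>t\<in>{0..1}. F t0 - t0 \<le> F t - t"
    using continuous_attains_inf[OF compact_Icc _ cont] by auto
  obtain t1 where t1: "\<forall>t\<in>{0..1}. F t - t \<le> F t1 - t1"
    using continuous_attains_sup[OF compact_Icc _ cont] by auto
  have "F t - t = F (frac t) - frac t" for t
    using degree_one_lift_add_int[OF assms, of "frac t" "\<lfloor>t\<rfloor>"] by (simp add: frac_def)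
  moreover have "frac t \<in> {0..1}" for t
    using frac_lt_1[of t] by simp
  ultimately show ?thesis
    using that t0 t1 by metis
qed

lemma continuous_Ints_valued_constant:
  fixes g :: "real \<Rightarrow> real"
  assumes "continuous_on UNIV g" "\<And>t. g t \<in> \<int>"
  obtains a :: int where "\<And>t. g t = of_int a"
proof -
  have "g constant_on UNIV"
  proof (rule continuous_discrete_range_constant[OF connected_UNIV assms(1)])
    show "\<exists>e>0. \<forall>y. y \<in> UNIV \<and> g y \<noteq> g x \<longrightarrow> e \<le> norm (g y - g x)" for x
      using assms(2) by (intro exI[of _ 1]) (auto intro: Ints_nonzero_abs_ge1)
  qed
  moreover obtain a where "g 0 = of_int a"
    using assms(2)[of 0] by (auto elim: Ints_cases)
  ultimately show ?thesis
    using that by (auto simp: constant_on_def)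
qed

lemma continuous_avoiding_Ints:
  fixes g :: "real \<Rightarrow> real"
  assumes "continuous_on UNIV g" "\<And>t. g t \<notin> \<int>"
  obtains m :: int where "\<And>t. of_int m < g t \<and> g t < of_int m + 1"
proof
  fix t
  define m where "m = \<lfloor>g 0\<rfloor>"
  have conn: "connected (range g)"
    using connected_continuous_image[OF assms(1) connected_UNIV] .
  have g0: "of_int m < g 0" "g 0 < of_int m + 1"
    using assms(2)[of 0] floor_correct[of "g 0"] unfolding m_def
    by (metis Ints_of_int order_le_less) linarith
  have "of_int m \<notin> range g" "of_int m + 1 \<notin> range g"
    using assms(2) by (metis Ints_of_int imageE, metis Ints_1 Ints_add Ints_of_int imageE)
  then show "of_int m < g t \<and> g t < of_int m + 1"
    using g0 connectedD_interval[OF conn, of "g t" "g 0"] connectedD_interval[OF conn, of "g 0" "g t"]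
    by (metis linorder_not_le order_less_imp_le rangeI)
qed

lemma circ_eq_iff: "circ a = circ b \<longleftrightarrow> a - b \<in> \<int>"
proof -
  have "circ a = circ b * cis (2 * pi * (a - b))"
    by (simp add: circ_def cis_mult algebra_simps)
  then have "circ a = circ b \<longleftrightarrow> cis (2 * pi * (a - b)) = 1"
    by (auto simp: circ_def)
  also have "\<dots> \<longleftrightarrow> (\<exists>k::int. 2 * pi * (a - b) = of_int (2 * k) * pi)"
    by (simp add: cis_conv_exp exp_eq_1)
  also have "\<dots> \<longleftrightarrow> (\<exists>k::int. a - b = of_int k)"
    by auto
  finally show ?thesis
    by (auto elim: Ints_cases)
qed

lemma Diff2_S1_lift:
  "f \<in> carrier Diff2_S1 \<Longrightarrow> \<exists>F. degree_one_lift F \<and> (\<forall>t. f (circ t) = circ (F t))"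
  by (auto simp: Diff2_S1_def intro: C2_lift_imp_degree_one_lift)

lemma mult_Diff2_S1: "f \<otimes>\<^bsub>Diff2_S1\<^esub> g = f \<circ> g"
  by (simp add: Diff2_S1_def)

lemma funpow_displacement_bounds:
  fixes F :: "real \<Rightarrow> real"
  assumes "\<And>t. d \<le> F t - t \<and> F t - t \<le> M"
  shows "t + real N * d \<le> (F ^^ N) t \<and> (F ^^ N) t \<le> t + real N * M"
proof (induction N)
  case (Suc N)
  then show ?case
    using assms[of "(F ^^ N) t"] by (simp add: algebra_simps)
qed simp

lemma commute_mod_Ints_imp_commute:
  assumes Y: "degree_one_lift Y" and "degree_one_lift Z"
    and Z: "\<And>t. t < Z t \<and> Z t < t + 1"
    and comm: "\<And>t. Z (Y t) - Y (Z t) \<in> \<int>"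
  shows "Z (Y t) = Y (Z t)"
proof -
  have "continuous_on UNIV (\<lambda>t. Z (Y t))" "continuous_on UNIV (\<lambda>t. Y (Z t))"
    using degree_one_lift_compose[OF assms(2) Y] degree_one_lift_compose[OF Y assms(2)]
    by (simp_all add: degree_one_lift_def comp_def)
  then have cont: "continuous_on UNIV (\<lambda>t. Z (Y t) - Y (Z t))"
    by (rule continuous_on_diff)
  obtain b where b: "\<And>t. Z (Y t) - Y (Z t) = of_int b"
    using continuous_Ints_valued_constant[OF cont comm] by blast
  have mono: "mono Y" and "Y 1 = Y 0 + 1"
    using Y unfolding degree_one_lift_def by (auto dest: spec[of _ 0])
  moreover have "Y 0 \<le> Y (Z 0)" "Y (Z 0) \<le> Y 1"
    using monoD[OF mono, of 0 "Z 0"] monoD[OF mono, of "Z 0" 1] Z[of 0] by simp_all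
  ultimately have "\<bar>of_int b :: real\<bar> < 1"
    using Z[of "Y 0"] b[of 0] by (simp add: abs_less_iff)
  then have "b = 0"
    by simp
  then show ?thesis
    using b[of t] by simp
qed

lemma funpow_twisted_relation:
  assumes Y: "degree_one_lift Y"
    and rel: "\<And>t. Y (X t) = X (Y (Z t)) + of_int a"
    and comm: "\<And>t. Z (Y t) = Y (Z t)"
  shows "(Y ^^ N) (X t) = X ((Y ^^ N) ((Z ^^ N) t)) + of_int a * real N"
proof (induction N)
  case (Suc N)
  let ?s = "(Y ^^ N) ((Z ^^ N) t)"
  have "Z ((Y ^^ m) s) = (Y ^^ m) (Z s)" for m s
    by (induction m) (simp_all add: comm)
  then have "Z ?s = (Y ^^ N) ((Z ^^ Suc N) t)"
    by simp
  then have "(Y ^^ Suc N) (X t) = X ((Y ^^ Suc N) ((Z ^^ Suc N) t)) + of_int a + of_int a * real N"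
    using Suc degree_one_lift_add_int[OF Y, of "X ?s" "a * int N"] by (simp add: rel)
  then show ?case
    by (simp add: algebra_simps)
qed simp

lemma not_bounded_int_multiple_plus_drift:
  fixes a :: int
  assumes "0 < d" "M < 1"
    and u: "\<And>N. real N * d \<le> u N \<and> u N \<le> real N * M"
    and bounded: "\<And>N. \<bar>of_int a * real N + u N\<bar> \<le> C"
  shows False
proof (cases "a \<ge> 0")
  case True
  obtain N :: nat where "C < real N * d"
    using ex_less_of_nat_mult[OF \<open>0 < d\<close>] by blast
  moreover have "0 \<le> of_int a * real N"
    using True by simp
  ultimately show False
    using u[of N] bounded[of N] by linarith
next
  case False
  obtain N :: nat where "C < real N * (1 - M)"
    using ex_less_of_nat_mult[of "1 - M"] \<open>M < 1\<close> by auto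
  moreover have "of_int a * real N \<le> - real N"
    using False mult_right_mono[of "of_int a" "-1" "real N"] by simp
  ultimately show False
    using u[of N] bounded[of N] by (simp add: algebra_simps abs_le_iff)
qed

lemma no_lifts_twisted_commuting:
  assumes X: "degree_one_lift X" and Y: "degree_one_lift Y" and Z: "degree_one_lift Z"
    and Z_between: "\<And>t. t < Z t \<and> Z t < t + 1"
    and rel: "\<And>t. Y (X t) - X (Y (Z t)) \<in> \<int>"
    and comm: "\<And>t. Z (Y t) - Y (Z t) \<in> \<int>"
  shows False
proof -
  have "continuous_on UNIV (\<lambda>t. Y (X t))" "continuous_on UNIV (\<lambda>t. X (Y (Z t)))"
    using degree_one_lift_compose[OF Y X] degree_one_lift_compose[OF X degree_one_lift_compose[OF Y Z]]
    by (simp_all add: degree_one_lift_def comp_def)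
  then have cont: "continuous_on UNIV (\<lambda>t. Y (X t) - X (Y (Z t)))"
    by (rule continuous_on_diff)
  obtain a where a: "\<And>t. Y (X t) - X (Y (Z t)) = of_int a"
    using continuous_Ints_valued_constant[OF cont rel] by blast
  have rel_a: "Y (X t) = X (Y (Z t)) + of_int a" for t
    using a[of t] by linarith
  have commute: "Z (Y t) = Y (Z t)" for t
    using commute_mod_Ints_imp_commute[OF Y Z Z_between comm] .
  have "\<bar>of_int a * real N + (Z ^^ N) 0\<bar> \<le> 3" for N
  proof -
    let ?P = "Y ^^ N" and ?u = "(Z ^^ N) 0"
    have P: "degree_one_lift ?P"
      using Y by (rule degree_one_lift_funpow)
    have "\<bar>?P (0 + X 0) - ?P 0 - X 0\<bar> \<le> 1" "\<bar>?P (0 + ?u) - ?P 0 - ?u\<bar> \<le> 1"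
      "\<bar>X (0 + ?P ?u) - X 0 - ?P ?u\<bar> \<le> 1"
      using degree_one_lift_displacement[OF P] degree_one_lift_displacement[OF X] by blast+
    moreover have "of_int a * real N = ?P (X 0) - X (?P ?u)"
      using funpow_twisted_relation[where X = X and Z = Z, OF Y rel_a commute, of N 0] by simp
    ultimately show ?thesis
      by (simp add: abs_le_iff)
  qed
  moreover obtain t0 t1 where "\<And>t. Z t0 - t0 \<le> Z t - t" "\<And>t. Z t - t \<le> Z t1 - t1"
    using degree_one_lift_displacement_attains_bounds[OF Z] by blast
  then have "real N * (Z t0 - t0) \<le> (Z ^^ N) 0 \<and> (Z ^^ N) 0 \<le> real N * (Z t1 - t1)" for N
    using funpow_displacement_bounds[of "Z t0 - t0" Z "Z t1 - t1" 0 N] by simp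
  ultimately show False
    using not_bounded_int_multiple_plus_drift[of "Z t0 - t0" "Z t1 - t1" "\<lambda>N. (Z ^^ N) 0" a 3]
      Z_between[of t0] Z_between[of t1]
    by simp
qed

lemma Diff2_S1_twisted_commuting_fixed_point:
  assumes f: "f \<in> carrier Diff2_S1" and g: "g \<in> carrier Diff2_S1" and h: "h \<in> carrier Diff2_S1"
    and rel: "g \<circ> f = f \<circ> (g \<circ> h)" and comm: "h \<circ> g = g \<circ> h"
  shows "has_fixed_point_S1 h"
proof (rule ccontr)
  assume no_fixed_point: "\<not> has_fixed_point_S1 h"
  obtain X Y Z where X: "degree_one_lift X" "\<And>t. f (circ t) = circ (X t)"
    and Y: "degree_one_lift Y" "\<And>t. g (circ t) = circ (Y t)"
    and Z: "degree_one_lift Z" "\<And>t. h (circ t) = circ (Z t)"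
    using Diff2_S1_lift[OF f] Diff2_S1_lift[OF g] Diff2_S1_lift[OF h] by metis
  have rel_lift: "Y (X t) - X (Y (Z t)) \<in> \<int>" for t
    using fun_cong[OF rel, of "circ t"] by (simp add: X Y Z circ_eq_iff)
  have comm_lift: "Z (Y t) - Y (Z t) \<in> \<int>" for t
    using fun_cong[OF comm, of "circ t"] by (simp add: Y Z circ_eq_iff)
  have "Z t - t \<notin> \<int>" for t
  proof
    assume "Z t - t \<in> \<int>"
    then have "h (circ t) = circ t"
      by (simp add: Z circ_eq_iff)
    moreover have "circ t \<in> S1"
      by (simp add: circ_def)
    ultimately show False
      using no_fixed_point by (auto simp: has_fixed_point_S1_def)
  qed
  moreover have "continuous_on UNIV (\<lambda>t. Z t - t)"
    using Z(1) unfolding degree_one_lift_def by (intro continuous_intros) auto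
  ultimately obtain m :: int where m: "\<And>t. of_int m < Z t - t \<and> Z t - t < of_int m + 1"
    using continuous_avoiding_Ints by blast
  define Z' where "Z' t = Z t - of_int m" for t
  have lift_Z': "degree_one_lift Z'"
    using Z(1) unfolding degree_one_lift_def Z'_def mono_def
    by (auto intro: continuous_intros)
  have Z'_between: "t < Z' t \<and> Z' t < t + 1" for t
    using m[of t] by (simp add: Z'_def)
  have rel_Z': "Y (X t) - X (Y (Z' t)) \<in> \<int>" for t
  proof -
    have "X (Y (Z' t)) = X (Y (Z t)) - of_int m"
      using degree_one_lift_add_int[OF Y(1), of "Z t" "- m"]
        degree_one_lift_add_int[OF X(1), of "Y (Z t)" "- m"]
      by (simp add: Z'_def)
    then have "Y (X t) - X (Y (Z' t)) = (Y (X t) - X (Y (Z t))) + of_int m"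
      by simp
    then show ?thesis
      using rel_lift[of t] by (metis Ints_add Ints_of_int)
  qed
  have comm_Z': "Z' (Y t) - Y (Z' t) \<in> \<int>" for t
    using comm_lift[of t] degree_one_lift_add_int[OF Y(1), of "Z t" "- m"] by (simp add: Z'_def)
  show False
    by (rule no_lifts_twisted_commuting[OF X(1) Y(1) lift_Z' Z'_between rel_Z' comm_Z'])
qed

lemma transvection_image_has_fixed_point:
  assumes \<phi>: "\<phi> \<in> hom (Aut_free n) Diff2_S1"
    and "i \<in> {1..n}" "j \<in> {1..n}" "k \<in> {1..n}" "i \<noteq> j" "i \<noteq> k" "k \<noteq> j"
  shows "has_fixed_point_S1 (\<phi> (subst_hom n (transvection right i (j, True))))"
proof -
  let ?x = "subst_hom n (transvection right i (k, True))"
    and ?y = "subst_hom n (transvection right k (j, True))"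
    and ?z = "subst_hom n (transvection right i (j, True))"
  note rels = transvection_relations[OF assms(2-7), of right]
  have "\<phi> ?y \<circ> \<phi> ?x = \<phi> ?x \<circ> (\<phi> ?y \<circ> \<phi> ?z)"
    using rels hom_mult[OF \<phi>] by (metis mult_Diff2_S1)
  moreover have "\<phi> ?z \<circ> \<phi> ?y = \<phi> ?y \<circ> \<phi> ?z"
    using rels hom_mult[OF \<phi>] by (metis mult_Diff2_S1)
  ultimately show ?thesis
    by (rule Diff2_S1_twisted_commuting_fixed_point[OF hom_in_carrier[OF \<phi> rels(1)]
          hom_in_carrier[OF \<phi> rels(2)] hom_in_carrier[OF \<phi> rels(3)]])
qed

theorem lemma4p2:
  fixes n :: nat and \<phi> :: "(letter list \<Rightarrow> letter list) \<Rightarrow> (complex \<Rightarrow> complex)"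
  assumes "n > 4"
    and "\<phi> \<in> hom (Aut_free n) Diff2_S1"
    and "i \<in> {1..n}" and "j \<in> {1..n}" and "i \<noteq> j"
  shows "has_fixed_point_S1 (\<phi> (A_aut n i j)) \<and> has_fixed_point_S1 (\<phi> (B_aut n i j))"
proof -
  obtain k where k: "k \<in> {1..n}" "i \<noteq> k" "k \<noteq> j"
  proof
    let ?k = "if 1 \<notin> {i, j} then 1 else if 2 \<notin> {i, j} then 2 else 3"
    show "?k \<in> {1..n}" "i \<noteq> ?k" "?k \<noteq> j"
      using assms(1,5) by auto
  qed
  show ?thesis
    unfolding A_aut_eq_transvection B_aut_eq_transvection
    using transvection_image_has_fixed_point[OF assms(2-4) k(1) assms(5) k(2,3)] by blast
qed

end
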